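(* Let $C:2^M\to\mathbb{R}_{\ge 0}$ be a normalized cost function. There is a unique function $P_C$ on allocations with $P_C(\vec\emptyset)=0$ such that for every allocation $\vec S=(S_1,\dots,S_n)$, $$\sum_{i\in N}\left[P_C(\vec S)-P_C(\vec S-S_i)\right]=C(\vec S).$$ Moreover, this function is given by $$P_C(\vec S)=\sum_{\emptyset\neq I\subseteq N}\frac{C\left(\bigcup_{i\in I}S_i\right)}{|I|\cdot\binom{n}{|I|}}.$$
   Context: Setting. $N=\{1,\dots,n\}$ is a set of players and $M_1,\dots,M_n$ are pairwise disjoint finite sets; $M=\bigcup_i M_i$. An allocation is a vector $\vec S=(S_1,\dots,S_n)$ with $S_i\subseteq M_i$; since the $M_i$ are disjoint, allocations are identified with subsets $\bigcup_i S_i$ of $M$, so a function on allocations is a set function on $2^M$. Set operations between allocations are componentwise, $\vec\emptyset=(\emptyset,\dots,\emptyset)$, and $\vec S-S_i$ denotes the allocation obtained from $\vec S$ by replacing its $i$-th component with $\emptyset$. A cost function $C:2^M\to\mathbb{R}_{\ge0}$ is normalized if $C(\emptyset)=0$. *)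

theory Defs
  imports Complex_Main "HOL-Library.FuncSet"
begin

text \<open>Players are 1..n; item sets M i (i in 1..n) are pairwise disjoint and finite.
 An allocation (S_1,...,S_n) with S_i a subset of M_i is identified with the set
 T = union of the S_i, a subset of the ground set M = union of the M i; then
 S_i = T \<inter> M i, and (S - S_i) is T - M i.\<close>

definition ground :: "nat \<Rightarrow> (nat \<Rightarrow> 'a set) \<Rightarrow> 'a set" where
  "ground n M = (\<Union>i\<in>{1..n}. M i)"

definition is_potential :: "nat \<Rightarrow> (nat \<Rightarrow> 'a set) \<Rightarrow> ('a set \<Rightarrow> real) \<Rightarrow> ('a set \<Rightarrow> real) \<Rightarrow> bool" where
  "is_potential n M C P \<longleftrightarrow>
     P {} = 0 \<and>
     (\<forall>T. T \<subseteq> ground n M \<longrightarrow> (\<Sum>i\<in>{1..n}. P T - P (T - (T \<inter> M i))) = C T)"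

definition P_formula :: "nat \<Rightarrow> (nat \<Rightarrow> 'a set) \<Rightarrow> ('a set \<Rightarrow> real) \<Rightarrow> 'a set \<Rightarrow> real" where
  "P_formula n M C T =
     (\<Sum>I\<in>{I. I \<subseteq> {1..n} \<and> I \<noteq> {}}.
        C (\<Union>i\<in>I. T \<inter> M i) / (real (card I) * real (n choose card I)))"

end

theory Submission
  imports Defs
begin

text \<open>Uniqueness: a potential satisfies \<open>k \<cdot> P(T) = C(T) + \<Sum>\<^sub>i P(T - S\<^sub>i)\<close>, the sum
  over the \<open>k > 0\<close> players active in a nonempty \<open>T\<close>, so it is determined by induction on
  \<open>|T|\<close>. Existence: write \<open>g(I) = C(\<Union>\<^sub>i\<^sub>\<in>\<^sub>I S\<^sub>i)\<close>; by disjointness, removing player \<open>i\<close>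
  turns \<open>g(I)\<close> into \<open>g(I - {i})\<close>. Summed over \<open>i\<close> with the weights \<open>1/(|I| \<cdot> (n choose |I|))\<close>,
  these marginal contributions telescope to \<open>g(N) - g(\<emptyset>) = C(T)\<close>: each \<open>I\<close> is gained
  \<open>|I|\<close> times and lost \<open>n - |I|\<close> times, and
  \<open>(|I|+1) \<cdot> (n choose |I|+1) = (n - |I|) \<cdot> (n choose |I|)\<close>.\<close>

lemma sum_subsets_containing:
  fixes f :: "'b set \<Rightarrow> 'c::semiring_1"
  assumes "finite N"
  shows "(\<Sum>i\<in>N. \<Sum>I\<in>{I. I \<subseteq> N \<and> i \<in> I}. f I) = (\<Sum>I\<in>Pow N. of_nat (card I) * f I)"
proof -
  have "(\<Sum>i\<in>N. \<Sum>I\<in>{I. I \<subseteq> N \<and> i \<in> I}. f I) = (\<Sum>i\<in>N. \<Sum>I\<in>{I\<in>Pow N. i \<in> I}. f I)"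
    by (intro sum.cong) auto
  also have "\<dots> = (\<Sum>I\<in>Pow N. \<Sum>i\<in>{i\<in>N. i \<in> I}. f I)"
    using assms by (intro sum.swap_restrict) auto
  also have "\<dots> = (\<Sum>I\<in>Pow N. of_nat (card I) * f I)"
  proof (intro sum.cong refl)
    fix I assume "I \<in> Pow N"
    then have "{i\<in>N. i \<in> I} = I" by auto
    then show "(\<Sum>i\<in>{i\<in>N. i \<in> I}. f I) = of_nat (card I) * f I" by simp
  qed
  finally show ?thesis .
qed

lemma sum_subsets_containing_remove:
  fixes f :: "'b set \<Rightarrow> 'c::semiring_1"
  assumes "finite N"
  shows "(\<Sum>i\<in>N. \<Sum>I\<in>{I. I \<subseteq> N \<and> i \<in> I}. f (I - {i})) = (\<Sum>J\<in>Pow N. of_nat (card (N - J)) * f J)"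
proof -
  have "(\<Sum>I\<in>{I. I \<subseteq> N \<and> i \<in> I}. f (I - {i})) = (\<Sum>J\<in>{J\<in>Pow N. i \<notin> J}. f J)"
    if "i \<in> N" for i
    by (rule sum.reindex_bij_witness[of _ "insert i" "\<lambda>I. I - {i}"]) (use that in auto)
  then have "(\<Sum>i\<in>N. \<Sum>I\<in>{I. I \<subseteq> N \<and> i \<in> I}. f (I - {i})) = (\<Sum>i\<in>N. \<Sum>J\<in>{J\<in>Pow N. i \<notin> J}. f J)"
    by (rule sum.cong[OF refl])
  also have "\<dots> = (\<Sum>J\<in>Pow N. \<Sum>i\<in>{i\<in>N. i \<notin> J}. f J)"
    using assms by (intro sum.swap_restrict) auto
  also have "\<dots> = (\<Sum>J\<in>Pow N. of_nat (card (N - J)) * f J)"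
    by (intro sum.cong refl) (simp add: set_diff_eq)
  finally show ?thesis .
qed

lemma Suc_times_binomial_Suc: "Suc k * (m choose Suc k) = (m - k) * (m choose k)"
  by (metis binomial_absorb_comp binomial_absorption)

lemma sum_marginals_shapley_weights:
  fixes g :: "'b set \<Rightarrow> real"
  assumes N: "finite N"
  shows "(\<Sum>i\<in>N. \<Sum>I\<in>{I. I \<subseteq> N \<and> i \<in> I}.
           (g I - g (I - {i})) / (real (card I) * real (card N choose card I))) = g N - g {}"
proof -
  define m where "m = card N"
  define w where "w k = real k * real (m choose k)" for k
  define h where "h J = g J / real (m choose card J)" for J
  define f where "f J = g J / w (Suc (card J))" for J
  have card_le: "card J \<le> m" if "J \<in> Pow N" for J
    using that N by (simp add: m_def card_mono)
  have gained: "(\<Sum>i\<in>N. \<Sum>I\<in>{I. I \<subseteq> N \<and> i \<in> I}. g I / w (card I))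
      = (\<Sum>I\<in>Pow N. if I = {} then 0 else h I)"
  proof -
    have "real (card I) * (g I / w (card I)) = (if I = {} then 0 else h I)" if "I \<in> Pow N" for I
      using that N card_le[OF that] by (auto simp: w_def h_def finite_subset)
    then show ?thesis
      by (simp add: sum_subsets_containing[OF N])
  qed
  have lost: "(\<Sum>i\<in>N. \<Sum>I\<in>{I. I \<subseteq> N \<and> i \<in> I}. g (I - {i}) / w (card I))
      = (\<Sum>J\<in>Pow N. if J = N then 0 else h J)"
  proof -
    have shift: "(\<Sum>I\<in>{I. I \<subseteq> N \<and> i \<in> I}. g (I - {i}) / w (card I))
        = (\<Sum>I\<in>{I. I \<subseteq> N \<and> i \<in> I}. f (I - {i}))" for i
    proof (intro sum.cong refl)
      fix I assume "I \<in> {I. I \<subseteq> N \<and> i \<in> I}"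
      then have "card I = Suc (card (I - {i}))"
        using N by (metis (no_types, lifting) card_Suc_Diff1 finite_subset mem_Collect_eq)
      then show "g (I - {i}) / w (card I) = f (I - {i})" by (simp add: f_def)
    qed
    have cancel: "real (card (N - J)) * f J = (if J = N then 0 else h J)"
      if J: "J \<in> Pow N" for J
    proof (cases "J = N")
      case False
      then have "card J < m"
        using J N by (simp add: m_def psubset_card_mono psubsetI)
      moreover have "w (Suc (card J)) = real (m - card J) * real (m choose card J)"
        unfolding w_def by (metis Suc_times_binomial_Suc of_nat_mult)
      moreover have "card (N - J) = m - card J"
        using J N by (simp add: m_def card_Diff_subset finite_subset)
      ultimately show ?thesis
        using False by (simp add: f_def h_def)
    qed (simp add: f_def)
    have "(\<Sum>i\<in>N. \<Sum>I\<in>{I. I \<subseteq> N \<and> i \<in> I}. g (I - {i}) / w (card I))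
        = (\<Sum>i\<in>N. \<Sum>I\<in>{I. I \<subseteq> N \<and> i \<in> I}. f (I - {i}))"
      by (simp only: shift)
    also have "\<dots> = (\<Sum>J\<in>Pow N. real (card (N - J)) * f J)"
      by (rule sum_subsets_containing_remove[OF N])
    also have "\<dots> = (\<Sum>J\<in>Pow N. if J = N then 0 else h J)"
      using cancel by simp
    finally show ?thesis .
  qed
  have "(\<Sum>i\<in>N. \<Sum>I\<in>{I. I \<subseteq> N \<and> i \<in> I}.
           (g I - g (I - {i})) / (real (card I) * real (card N choose card I)))
      = (\<Sum>I\<in>Pow N. (if I = {} then 0 else h I) - (if I = N then 0 else h I))"
    using gained lost by (simp add: w_def m_def diff_divide_distrib sum_subtractf)
  also have "\<dots> = (\<Sum>I\<in>Pow N. (if I = N then h N else 0) - (if I = {} then h {} else 0))"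
    by (intro sum.cong refl) auto
  also have "\<dots> = h N - h {}"
    using N by (simp add: sum_subtractf)
  finally show ?thesis
    by (simp add: h_def m_def)
qed


definition active_players :: "nat \<Rightarrow> (nat \<Rightarrow> 'a set) \<Rightarrow> 'a set \<Rightarrow> nat set" where
  "active_players n M T = {i\<in>{1..n}. T \<inter> M i \<noteq> {}}"

lemma active_players_nonempty:
  assumes "T \<subseteq> ground n M" "T \<noteq> {}"
  shows "active_players n M T \<noteq> {}"
  using assms unfolding active_players_def ground_def by blast

lemma potential_recursion:
  assumes P: "is_potential n M C P" and T: "T \<subseteq> ground n M"
  shows "real (card (active_players n M T)) * P T
           = C T + (\<Sum>i\<in>active_players n M T. P (T - (T \<inter> M i)))"
proof -
  let ?K = "active_players n M T"
  have "(\<Sum>i\<in>{1..n}. P T - P (T - (T \<inter> M i))) = (\<Sum>i\<in>?K. P T - P (T - (T \<inter> M i)))"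
    by (rule sum.mono_neutral_right) (auto simp: active_players_def)
  then have "(\<Sum>i\<in>?K. P T - P (T - (T \<inter> M i))) = C T"
    using P T by (simp add: is_potential_def)
  then show ?thesis
    by (simp add: sum_subtractf)
qed

lemma potential_unique:
  assumes fin: "\<forall>i\<in>{1..n}. finite (M i)"
    and P: "P \<in> extensional (Pow (ground n M))" "is_potential n M C P"
    and Q: "Q \<in> extensional (Pow (ground n M))" "is_potential n M C Q"
  shows "P = Q"
proof (rule extensionalityI[OF P(1) Q(1)])
  have ground_fin: "finite (ground n M)"
    using fin by (simp add: ground_def)
  have "P T = Q T" if "T \<subseteq> ground n M" for T
    using that
  proof (induction "card T" arbitrary: T rule: less_induct)
    case less
    show ?case
    proof (cases "T = {}")
      case True
      then show ?thesis using P(2) Q(2) by (simp add: is_potential_def)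
    next
      case False
      let ?K = "active_players n M T"
      have "P (T - (T \<inter> M i)) = Q (T - (T \<inter> M i))" if "i \<in> ?K" for i
      proof (rule less.hyps)
        have "T - (T \<inter> M i) \<subset> T" using that by (auto simp: active_players_def)
        then show "card (T - (T \<inter> M i)) < card T"
          using less.prems ground_fin by (meson finite_subset psubset_card_mono)
      qed (use less.prems in auto)
      then have "real (card ?K) * P T = real (card ?K) * Q T"
        using potential_recursion[OF P(2) less.prems] potential_recursion[OF Q(2) less.prems]
        by simp
      moreover have "card ?K > 0"
        using active_players_nonempty[OF less.prems False]
        by (simp add: card_gt_0_iff active_players_def)
      ultimately show ?thesis by simp
    qed
  qed
  then show "P T = Q T" if "T \<in> Pow (ground n M)" for T
    using that by blast
qed

lemma Union_Int_remove_player: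
  assumes disj: "\<forall>i\<in>{1..n}. \<forall>j\<in>{1..n}. i \<noteq> j \<longrightarrow> M i \<inter> M j = {}"
    and "i \<in> {1..n}" "I \<subseteq> {1..n}"
  shows "(\<Union>j\<in>I. (T - (T \<inter> M i)) \<inter> M j) = (\<Union>j\<in>I - {i}. T \<inter> M j)"
  using assms by blast

lemma is_potential_P_formula:
  assumes disj: "\<forall>i\<in>{1..n}. \<forall>j\<in>{1..n}. i \<noteq> j \<longrightarrow> M i \<inter> M j = {}"
    and norm: "C {} = 0"
  shows "is_potential n M C (restrict (P_formula n M C) (Pow (ground n M)))"
  unfolding is_potential_def
proof (intro conjI allI impI)
  let ?P = "restrict (P_formula n M C) (Pow (ground n M))"
  show "?P {} = 0"
    using norm by (simp add: P_formula_def)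
  fix T assume T: "T \<subseteq> ground n M"
  define N where "N = {1..n}"
  define g where "g I = C (\<Union>j\<in>I. T \<inter> M j)" for I
  define w where "w I = real (card I) * real (n choose card I)" for I :: "nat set"
  have "?P T - ?P (T - (T \<inter> M i)) = (\<Sum>I\<in>{I. I \<subseteq> N \<and> i \<in> I}. (g I - g (I - {i})) / w I)"
    if i: "i \<in> N" for i
  proof -
    have "?P (T - (T \<inter> M i)) = (\<Sum>I\<in>{I. I \<subseteq> N \<and> I \<noteq> {}}. g (I - {i}) / w I)"
      using T Union_Int_remove_player[OF disj] i
      by (auto simp: P_formula_def g_def w_def N_def intro!: sum.cong)
    moreover have "?P T = (\<Sum>I\<in>{I. I \<subseteq> N \<and> I \<noteq> {}}. g I / w I)"
      using T by (simp add: P_formula_def g_def w_def N_def)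
    ultimately have "?P T - ?P (T - (T \<inter> M i))
        = (\<Sum>I\<in>{I. I \<subseteq> N \<and> I \<noteq> {}}. (g I - g (I - {i})) / w I)"
      by (simp add: diff_divide_distrib sum_subtractf)
    also have "\<dots> = (\<Sum>I\<in>{I. I \<subseteq> N \<and> i \<in> I}. (g I - g (I - {i})) / w I)"
      by (rule sum.mono_neutral_right) (auto simp: N_def)
    finally show ?thesis .
  qed
  then have "(\<Sum>i\<in>N. ?P T - ?P (T - (T \<inter> M i)))
      = (\<Sum>i\<in>N. \<Sum>I\<in>{I. I \<subseteq> N \<and> i \<in> I}. (g I - g (I - {i})) / w I)"
    by simp
  also have "\<dots> = g N - g {}"
    using sum_marginals_shapley_weights[of N g] by (simp add: w_def N_def)
  also have "\<dots> = C T"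
    using T norm by (auto simp: g_def N_def ground_def intro!: arg_cong[where f = C])
  finally show "(\<Sum>i\<in>{1..n}. ?P T - ?P (T - (T \<inter> M i))) = C T"
    by (simp add: N_def)
qed

theorem proposition3p1:
  fixes n :: nat and M :: "nat \<Rightarrow> 'a set" and C :: "'a set \<Rightarrow> real"
  assumes fin: "\<forall>i\<in>{1..n}. finite (M i)"
    and disj: "\<forall>i\<in>{1..n}. \<forall>j\<in>{1..n}. i \<noteq> j \<longrightarrow> M i \<inter> M j = {}"
    and nonneg: "\<forall>T. T \<subseteq> ground n M \<longrightarrow> C T \<ge> 0"
    and norm: "C {} = 0"
  shows "(\<exists>!P. P \<in> extensional (Pow (ground n M)) \<and> is_potential n M C P)
    \<and> is_potential n M C (restrict (P_formula n M C) (Pow (ground n M)))"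
proof -
  have "is_potential n M C (restrict (P_formula n M C) (Pow (ground n M)))"
    using disj norm by (rule is_potential_P_formula)
  moreover have "restrict (P_formula n M C) (Pow (ground n M)) \<in> extensional (Pow (ground n M))"
    by simp
  ultimately show ?thesis
    using potential_unique[OF fin] by blast
qed

end
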